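(* Let $X$ be a represented space, let $Y$ be a computable metric space and let $f:X\to Y$ be a single-valued (total) function. If there is a multi-valued function $g$ (not necessarily computable) with values in $\mathrm{Tr}$ such that $f\le_W\tfrac12\text{-}\mathsf{WWKL}\circ g$, then $f$ is computable.
   Context: A represented space is a pair $(X,\delta_X)$ with $\delta_X:\subseteq\mathbb{N}^\mathbb{N}\to X$ a partial surjection; a computable metric space is represented by its Cauchy representation. A realizer of $f:\subseteq X\rightrightarrows Y$ is a partial $F$ with $\delta_Y F(p)\in f(\delta_X(p))$ for all $p\in\mathrm{dom}(f\circ\delta_X)$; $f$ is computable if it has a computable realizer. $f\le_W g$ if there are computable partial $H,K:\subseteq\mathbb{N}^\mathbb{N}\to\mathbb{N}^\mathbb{N}$ such that $p\mapsto H\langle p,GK(p)\rangle$ realizes $f$ for every realizer $G$ of $g$. Composition of multi-valued functions: $(h\circ g)(x)=\{z:\exists y\in g(x),\ z\in h(y)\}$ with $\mathrm{dom}(h\circ g)=\{x:g(x)\subseteq\mathrm{dom}(h)\}$. $\mathrm{Tr}$ is the set of binary trees $T\subseteq\{0,1\}^*$, represented by characteristic functions; $[T]$ its set of infinite paths; $\mu$ the uniform measure on $2^\mathbb N$ ($\mu(w2^\mathbb N)=2^{-|w|}$). $\tfrac12\text{-}\mathsf{WWKL}:\subseteq\mathrm{Tr}\rightrightarrows2^\mathbb N$, $T\mapsto[T]$, with domain $\{T:\mu([T])>\tfrac12\}$. *)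

theory Defs
  imports "HOL-Probability.Probability" "HOL-Library.Nat_Bijection"
begin

text \<open>General recursive functions with regular minimisation (the class of total
recursive functions). recfn n f: f is a recursive function of arity n,
acting on argument lists of length n.\<close>

definition prim_rec_op :: "(nat list \<Rightarrow> nat) \<Rightarrow> (nat list \<Rightarrow> nat) \<Rightarrow> nat list \<Rightarrow> nat" where
  "prim_rec_op g h = (\<lambda>xs. rec_nat (g (tl xs)) (\<lambda>k acc. h (k # acc # tl xs)) (hd xs))"

inductive recfn :: "nat \<Rightarrow> (nat list \<Rightarrow> nat) \<Rightarrow> bool" where
  rf_zero: "recfn n (\<lambda>xs. 0)"
| rf_succ: "recfn 1 (\<lambda>xs. Suc (xs ! 0))"
| rf_proj: "i < n \<Longrightarrow> recfn n (\<lambda>xs. xs ! i)"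
| rf_comp: "recfn m f \<Longrightarrow> length gs = m \<Longrightarrow> \<forall>g\<in>set gs. recfn n g
             \<Longrightarrow> recfn n (\<lambda>xs. f (map (\<lambda>g. g xs) gs))"
| rf_prec: "recfn n g \<Longrightarrow> recfn (Suc (Suc n)) h \<Longrightarrow> recfn (Suc n) (prim_rec_op g h)"
| rf_mu: "recfn (Suc n) g \<Longrightarrow> (\<forall>xs. length xs = n \<longrightarrow> (\<exists>y. g (y # xs) = 0))
             \<Longrightarrow> recfn n (\<lambda>xs. LEAST y. g (y # xs) = 0)"

definition total_computable :: "(nat \<Rightarrow> nat) \<Rightarrow> bool" where
  "total_computable a \<longleftrightarrow> (\<exists>r. recfn 1 r \<and> (\<forall>x. a x = r [x]))"

type_synonym baire = "nat \<Rightarrow> nat"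

definition k2_found :: "baire \<Rightarrow> baire \<Rightarrow> nat \<Rightarrow> nat \<Rightarrow> bool" where
  "k2_found a p n m \<longleftrightarrow> a (list_encode (n # map p [0..<m])) > 0"

definition kleene_app :: "baire \<Rightarrow> baire \<Rightarrow> baire option" where
  "kleene_app a p =
     (if \<forall>n. \<exists>m. k2_found a p n m
      then Some (\<lambda>n. a (list_encode (n # map p [0..<(LEAST m. k2_found a p n m)])) - 1)
      else None)"

definition computable_pf :: "(baire \<Rightarrow> baire option) \<Rightarrow> bool" where
  "computable_pf F \<longleftrightarrow>
     (\<exists>a. total_computable a \<and> (\<forall>p. F p \<noteq> None \<longrightarrow> kleene_app a p = F p))"

definition bpair :: "baire \<Rightarrow> baire \<Rightarrow> baire" where
  "bpair p q = (\<lambda>n. if even n then p (n div 2) else q (n div 2))"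

definition representation :: "(baire \<Rightarrow> 'a option) \<Rightarrow> bool" where
  "representation d \<longleftrightarrow> (\<forall>x. \<exists>p. d p = Some x)"

text \<open>Multi-valued partial functions are modelled as set-valued functions;
the domain is the set of points with nonempty value set.\<close>
definition mv_dom :: "('a \<Rightarrow> 'b set) \<Rightarrow> 'a set" where
  "mv_dom F = {x. F x \<noteq> {}}"

definition mv_comp :: "('b \<Rightarrow> 'c set) \<Rightarrow> ('a \<Rightarrow> 'b set) \<Rightarrow> 'a \<Rightarrow> 'c set" where
  "mv_comp h g = (\<lambda>x. if g x \<subseteq> mv_dom h then {z. \<exists>y\<in>g x. z \<in> h y} else {})"

definition realizer ::
  "(baire \<Rightarrow> 'a option) \<Rightarrow> (baire \<Rightarrow> 'b option) \<Rightarrow> ('a \<Rightarrow> 'b set) \<Rightarrow> (baire \<Rightarrow> baire option) \<Rightarrow> bool" where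
  "realizer dX dY F G \<longleftrightarrow>
     (\<forall>p x. dX p = Some x \<and> x \<in> mv_dom F \<longrightarrow>
        (\<exists>q y. G p = Some q \<and> dY q = Some y \<and> y \<in> F x))"

definition computable_mv ::
  "(baire \<Rightarrow> 'a option) \<Rightarrow> (baire \<Rightarrow> 'b option) \<Rightarrow> ('a \<Rightarrow> 'b set) \<Rightarrow> bool" where
  "computable_mv dX dY F \<longleftrightarrow> (\<exists>G. computable_pf G \<and> realizer dX dY F G)"

definition weihrauch_le ::
  "(baire \<Rightarrow> 'a option) \<Rightarrow> (baire \<Rightarrow> 'b option) \<Rightarrow> ('a \<Rightarrow> 'b set) \<Rightarrow>
   (baire \<Rightarrow> 'c option) \<Rightarrow> (baire \<Rightarrow> 'd option) \<Rightarrow> ('c \<Rightarrow> 'd set) \<Rightarrow> bool" where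
  "weihrauch_le dX dY F dZ dW G \<longleftrightarrow>
     (\<exists>H K. computable_pf H \<and> computable_pf K \<and>
        (\<forall>GG. realizer dZ dW G GG \<longrightarrow>
           realizer dX dY F (\<lambda>p. Option.bind (K p) (\<lambda>k. Option.bind (GG k) (\<lambda>q. H (bpair p q))))))"

definition rat_of_code :: "nat \<Rightarrow> real" where
  "rat_of_code k = (let (a, r) = prod_decode k; (b, c) = prod_decode r
                    in (real a - real b) / (real c + 1))"

definition computable_metric_space :: "(nat \<Rightarrow> 'b::metric_space) \<Rightarrow> bool" where
  "computable_metric_space s \<longleftrightarrow>
     closure (range s) = UNIV \<and>
     (\<exists>h. total_computable h \<and>
        (\<forall>i j n. \<bar>dist (s i) (s j) - rat_of_code (h (prod_encode (prod_encode (i, j), n)))\<bar>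
                  \<le> (1/2) ^ n))"

definition cauchy_rep :: "(nat \<Rightarrow> 'b::metric_space) \<Rightarrow> baire \<Rightarrow> 'b option" where
  "cauchy_rep s p =
     (if (\<forall>i j. i < j \<longrightarrow> dist (s (p i)) (s (p j)) < (1/2) ^ i) \<and>
         (\<exists>y. (\<lambda>n. s (p n)) \<longlonglongrightarrow> y)
      then Some (lim (\<lambda>n. s (p n))) else None)"

definition is_tree :: "bool list set \<Rightarrow> bool" where
  "is_tree T \<longleftrightarrow> (\<forall>w v. w @ v \<in> T \<longrightarrow> w \<in> T)"

definition Tr :: "bool list set set" where
  "Tr = {T. is_tree T}"

definition paths :: "bool list set \<Rightarrow> (nat \<Rightarrow> bool) set" where
  "paths T = {q. \<forall>n. map q [0..<n] \<in> T}"

text \<open>Shortlex bijection between binary words and natural numbers.\<close>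
definition word_code :: "bool list \<Rightarrow> nat" where
  "word_code w = foldl (\<lambda>acc b. 2 * acc + (if b then 1 else 0)) 1 w - 1"

definition tree_rep :: "baire \<Rightarrow> bool list set option" where
  "tree_rep p = (if (\<forall>n. p n \<le> 1) \<and> is_tree {w. p (word_code w) = 1}
                 then Some {w. p (word_code w) = 1} else None)"

definition cantor_rep :: "baire \<Rightarrow> (nat \<Rightarrow> bool) option" where
  "cantor_rep p = (if \<forall>n. p n \<le> 1 then Some (\<lambda>n. p n = 1) else None)"

definition cantor_measure :: "(nat \<Rightarrow> bool) measure" where
  "cantor_measure = (\<Pi>\<^sub>M i\<in>(UNIV::nat set). measure_pmf (bernoulli_pmf (1/2)))"

definition half_wwkl :: "bool list set \<Rightarrow> (nat \<Rightarrow> bool) set" where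
  "half_wwkl T = (if is_tree T \<and> measure cantor_measure (paths T) > 1/2 then paths T else {})"

end

theory Submission
  imports Defs
begin

text \<open>Fix a name p of x. The reduction turns p into an instance of 1/2-WWKL, a tree T whose
paths have measure > 1/2, and since a realizer of 1/2-WWKL may answer with any path of T,
the reduction must map every path q of T, paired with p, to a name of f x. The n-th digit of
a name of f x is computed by majority vote over the paths: search for a length L and a set W of
more than half of the words of length L such that on every word of W the reduction's
computation of a sufficiently precise digit halts and all these digits lie close together;
output the digit of the first word of W. Such a W exists because by compactness the
computation halts uniformly along all paths of T, while the length-L prefixes of paths of T
form more than half of all words. Conversely any such W contains a prefix of a path of T,
as two sets of measure > 1/2 meet, so the output is close to f x.\<close>

section \<open>Recursive functions on argument lists\<close>

definition recursive :: "nat \<Rightarrow> (nat list \<Rightarrow> nat) \<Rightarrow> bool" where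
  "recursive n f \<longleftrightarrow> (\<exists>g. recfn n g \<and> (\<forall>xs. length xs = n \<longrightarrow> g xs = f xs))"

definition decidable :: "nat \<Rightarrow> (nat list \<Rightarrow> bool) \<Rightarrow> bool" where
  "decidable n P \<longleftrightarrow> recursive n (\<lambda>xs. if P xs then 1 else 0)"

lemma recursive_cong:
  "recursive n f \<Longrightarrow> (\<And>xs. length xs = n \<Longrightarrow> f xs = g xs) \<Longrightarrow> recursive n g"
  unfolding recursive_def by metis

lemma decidable_cong:
  "decidable n P \<Longrightarrow> (\<And>xs. length xs = n \<Longrightarrow> P xs = Q xs) \<Longrightarrow> decidable n Q"
  unfolding decidable_def by (erule recursive_cong) auto

lemma recursive_recfn: "recfn n f \<Longrightarrow> recursive n f"
  unfolding recursive_def by auto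

lemma recursive_zero: "recursive n (\<lambda>xs. 0)"
  by (rule recursive_recfn) (rule rf_zero)

lemma recursive_proj: "i < n \<Longrightarrow> recursive n (\<lambda>xs. xs ! i)"
  by (rule recursive_recfn) (rule rf_proj)

lemma recursive_comp:
  assumes "recursive m f" "length gs = m" "\<forall>g\<in>set gs. recursive n g"
  shows "recursive n (\<lambda>xs. f (map (\<lambda>g. g xs) gs))"
proof -
  obtain f' where f': "recfn m f'" "\<And>xs. length xs = m \<Longrightarrow> f' xs = f xs"
    using assms(1) unfolding recursive_def by auto
  define rep where "rep g = (SOME g'. recfn n g' \<and> (\<forall>xs. length xs = n \<longrightarrow> g' xs = g xs))" for g
  have rep: "recfn n (rep g) \<and> (\<forall>xs. length xs = n \<longrightarrow> rep g xs = g xs)" if "g \<in> set gs" for g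
  proof -
    have "\<exists>g'. recfn n g' \<and> (\<forall>xs. length xs = n \<longrightarrow> g' xs = g xs)"
      using assms(3) that unfolding recursive_def by blast
    from someI_ex[OF this] show ?thesis unfolding rep_def .
  qed
  have "recfn n (\<lambda>xs. f' (map (\<lambda>g. g xs) (map rep gs)))"
    by (rule rf_comp) (use f' assms rep in auto)
  moreover have "f' (map (\<lambda>g. g xs) (map rep gs)) = f (map (\<lambda>g. g xs) gs)" if "length xs = n" for xs
  proof -
    have "map ((\<lambda>g. g xs) \<circ> rep) gs = map (\<lambda>g. g xs) gs"
      by (rule map_cong) (use rep that in auto)
    then show ?thesis by (simp only: map_map) (simp add: f' assms)
  qed
  ultimately show ?thesis unfolding recursive_def by blast
qed

lemma recursive_prim_rec:
  assumes "recursive n g" "recursive (Suc (Suc n)) h"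
  shows "recursive (Suc n) (prim_rec_op g h)"
proof -
  obtain g' where g': "recfn n g'" "\<And>xs. length xs = n \<Longrightarrow> g' xs = g xs"
    using assms(1) unfolding recursive_def by auto
  obtain h' where h': "recfn (Suc (Suc n)) h'" "\<And>xs. length xs = Suc (Suc n) \<Longrightarrow> h' xs = h xs"
    using assms(2) unfolding recursive_def by auto
  have "prim_rec_op g' h' xs = prim_rec_op g h xs" if "length xs = Suc n" for xs
  proof -
    have "rec_nat (g' (tl xs)) (\<lambda>k acc. h' (k # acc # tl xs)) k
        = rec_nat (g (tl xs)) (\<lambda>k acc. h (k # acc # tl xs)) k" for k
      by (induction k) (use that g' h' in auto)
    then show ?thesis unfolding prim_rec_op_def by simp
  qed
  then show ?thesis unfolding recursive_def using rf_prec[OF g'(1) h'(1)] by blast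
qed

lemma recursive_minimization:
  assumes "recursive (Suc n) g" "\<And>xs. length xs = n \<Longrightarrow> \<exists>y. g (y # xs) = 0"
  shows "recursive n (\<lambda>xs. LEAST y. g (y # xs) = 0)"
proof -
  obtain g' where g': "recfn (Suc n) g'" "\<And>xs. length xs = Suc n \<Longrightarrow> g' xs = g xs"
    using assms(1) unfolding recursive_def by auto
  have "recfn n (\<lambda>xs. LEAST y. g' (y # xs) = 0)"
    by (rule rf_mu) (use g' assms(2) in auto)
  then show ?thesis unfolding recursive_def using g' by force
qed

lemma total_computable_iff_recursive: "total_computable a \<longleftrightarrow> recursive 1 (\<lambda>xs. a (hd xs))"
proof
  assume "total_computable a"
  then obtain r where "recfn 1 r" "\<forall>x. a x = r [x]" unfolding total_computable_def by blast
  moreover have "r xs = a (hd xs)" if "length xs = 1" "\<forall>x. a x = r [x]" for xs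
    using that by (cases xs) auto
  ultimately show "recursive 1 (\<lambda>xs. a (hd xs))" unfolding recursive_def by blast
qed (force simp: recursive_def total_computable_def)

lemma recursive_Suc: "recursive n f \<Longrightarrow> recursive n (\<lambda>xs. Suc (f xs))"
  using recursive_comp[OF recursive_recfn[OF rf_succ], of "[f]" n] by simp

lemma recursive_const: "recursive n (\<lambda>xs. c)"
  by (induction c) (auto intro: recursive_zero recursive_Suc)

lemma recursive_comp_upt:
  assumes "recursive m f" "\<And>i. i < m \<Longrightarrow> recursive n (gs i)"
  shows "recursive n (\<lambda>xs. f (map (\<lambda>i. gs i xs) [0..<m]))"
  using recursive_comp[OF assms(1), of "map gs [0..<m]" n] assms(2) by (simp add: comp_def)

lemma recursive_comp1: "recursive 1 (\<lambda>xs. a (hd xs)) \<Longrightarrow> recursive n e \<Longrightarrow> recursive n (\<lambda>xs. a (e xs))"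
  using recursive_comp[of 1 "\<lambda>xs. a (hd xs)" "[e]" n] by simp

lemma map_nth_upt: "length xs = n \<Longrightarrow> map ((!) xs) [0..<n] = xs"
  using map_nth[of xs] by simp

lemma upt_Suc_0: "[0..<Suc n] = 0 # map Suc [0..<n]"
  by (simp add: map_Suc_upt upt_conv_Cons)

lemma recursive_rec_nat:
  assumes "recursive n z" "recursive (Suc (Suc n)) (\<lambda>ys. st (hd ys) (hd (tl ys)) (tl (tl ys)))"
    "recursive n b"
  shows "recursive n (\<lambda>xs. rec_nat (z xs) (\<lambda>k acc. st k acc xs) (b xs))"
proof -
  let ?h = "\<lambda>ys. st (hd ys) (hd (tl ys)) (tl (tl ys))"
  let ?args = "\<lambda>i. if i = 0 then b else (\<lambda>xs. xs ! (i - 1))"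
  have "recursive n (\<lambda>xs. prim_rec_op z ?h (map (\<lambda>i. ?args i xs) [0..<Suc n]))"
    by (rule recursive_comp_upt[OF recursive_prim_rec]) (auto intro: assms recursive_proj)
  then show ?thesis
  proof (rule recursive_cong)
    fix xs :: "nat list" assume "length xs = n"
    then have "map (\<lambda>i. ?args i xs) [0..<Suc n] = b xs # xs"
      by (simp add: upt_Suc_0 comp_def map_nth_upt del: upt_Suc)
    then show "prim_rec_op z ?h (map (\<lambda>i. ?args i xs) [0..<Suc n])
             = rec_nat (z xs) (\<lambda>k acc. st k acc xs) (b xs)"
      by (simp add: prim_rec_op_def)
  qed
qed

lemma recursive_tl: "recursive n f \<Longrightarrow> recursive (Suc n) (\<lambda>ys. f (tl ys))"
proof -
  assume "recursive n f"
  then have "recursive (Suc n) (\<lambda>ys. f (map (\<lambda>i. ys ! Suc i) [0..<n]))"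
    by (rule recursive_comp_upt) (auto intro: recursive_proj)
  then show ?thesis
  proof (rule recursive_cong)
    fix ys :: "nat list" assume "length ys = Suc n"
    then show "f (map (\<lambda>i. ys ! Suc i) [0..<n]) = f (tl ys)"
      by (cases ys) (auto simp: map_nth_upt)
  qed
qed

lemma recursive_tl2: "recursive n f \<Longrightarrow> recursive (Suc (Suc n)) (\<lambda>ys. f (tl (tl ys)))"
  using recursive_tl[OF recursive_tl] by simp

lemma recursive_hd: "recursive (Suc n) hd"
  by (rule recursive_cong[OF recursive_proj[of 0]]) (auto simp: length_Suc_conv)

lemma recursive_hd_tl: "recursive (Suc (Suc n)) (\<lambda>ys. hd (tl ys))"
  using recursive_tl[OF recursive_hd] .

lemma recursive_hd_tl2: "recursive (Suc (Suc (Suc n))) (\<lambda>ys. hd (tl (tl ys)))"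
  using recursive_tl[OF recursive_hd_tl] .

lemma recursive_subst_hd:
  assumes "recursive (Suc n) (\<lambda>ys. F (hd ys) (tl ys))" "recursive (Suc (Suc n)) e"
  shows "recursive (Suc (Suc n)) (\<lambda>ys. F (e ys) (tl (tl ys)))"
proof -
  let ?args = "\<lambda>i. if i = 0 then e else (\<lambda>ys. ys ! Suc i)"
  have "recursive (Suc (Suc n)) (\<lambda>ys. (\<lambda>ys. F (hd ys) (tl ys)) (map (\<lambda>i. ?args i ys) [0..<Suc n]))"
    by (rule recursive_comp_upt[OF assms(1)]) (auto intro: recursive_proj assms(2))
  then show ?thesis
  proof (rule recursive_cong)
    fix ys :: "nat list" assume "length ys = Suc (Suc n)"
    then obtain y y' zs where "ys = y # y' # zs" "length zs = n"
      by (metis Suc_length_conv)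
    then show "(\<lambda>ys. F (hd ys) (tl ys)) (map (\<lambda>i. ?args i ys) [0..<Suc n]) = F (e ys) (tl (tl ys))"
      by (simp add: upt_Suc_0 comp_def map_nth_upt del: upt_Suc)
  qed
qed

lemma recursive_drop_second:
  "recursive (Suc n) (\<lambda>ys. F (hd ys) (tl ys)) \<Longrightarrow> recursive (Suc (Suc n)) (\<lambda>ys. F (hd ys) (tl (tl ys)))"
  using recursive_subst_hd[OF _ recursive_hd] .

lemma rec_nat_add: "rec_nat a (\<lambda>k acc. Suc acc) b = a + (b::nat)"
  by (induction b) auto

lemma rec_nat_pred: "rec_nat 0 (\<lambda>k acc. k) b = (b::nat) - 1"
  by (induction b) auto

lemma rec_nat_sub: "rec_nat a (\<lambda>k acc. acc - Suc 0) b = a - (b::nat)"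
  by (induction b) auto

lemma rec_nat_mult: "rec_nat 0 (\<lambda>k acc. acc + a) b = a * (b::nat)"
  by (induction b) auto

lemma rec_nat_power: "rec_nat (Suc 0) (\<lambda>k acc. acc * a) b = a ^ (b::nat)"
  by (induction b) (simp_all add: power_Suc2)

lemma rec_nat_sum: "rec_nat 0 (\<lambda>k acc. acc + F k) b = (\<Sum>i<b. F i :: nat)"
  by (induction b) auto

lemma rec_nat_all:
  "rec_nat (Suc 0) (\<lambda>k acc. acc * (if P k then 1 else 0)) b = (if \<forall>i<b. P i then 1 else (0::nat))"
  by (induction b) (auto simp: less_Suc_eq)

lemma recursive_add: "recursive n f \<Longrightarrow> recursive n g \<Longrightarrow> recursive n (\<lambda>xs. f xs + g xs)"
proof -
  assume "recursive n f" "recursive n g"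
  then have "recursive n (\<lambda>xs. rec_nat (f xs) (\<lambda>k acc. Suc acc) (g xs))"
    by (intro recursive_rec_nat recursive_Suc recursive_hd_tl)
  then show ?thesis by (rule recursive_cong) (simp add: rec_nat_add)
qed

lemma recursive_pred: "recursive n f \<Longrightarrow> recursive n (\<lambda>xs. f xs - 1)"
proof -
  assume "recursive n f"
  then have "recursive n (\<lambda>xs. rec_nat 0 (\<lambda>k acc. k) (f xs))"
    by (intro recursive_rec_nat recursive_const recursive_hd)
  then show ?thesis by (rule recursive_cong) (simp add: rec_nat_pred)
qed

lemma recursive_sub: "recursive n f \<Longrightarrow> recursive n g \<Longrightarrow> recursive n (\<lambda>xs. f xs - g xs)"
proof -
  assume "recursive n f" "recursive n g"
  then have "recursive n (\<lambda>xs. rec_nat (f xs) (\<lambda>k acc. acc - 1) (g xs))"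
    by (intro recursive_rec_nat recursive_pred recursive_hd_tl)
  then show ?thesis by (rule recursive_cong) (simp add: rec_nat_sub)
qed

lemma recursive_mult: "recursive n f \<Longrightarrow> recursive n g \<Longrightarrow> recursive n (\<lambda>xs. f xs * g xs)"
proof -
  assume "recursive n f" "recursive n g"
  then have "recursive n (\<lambda>xs. rec_nat 0 (\<lambda>k acc. acc + f xs) (g xs))"
    by (intro recursive_rec_nat recursive_add recursive_const recursive_hd_tl recursive_tl2)
  then show ?thesis by (rule recursive_cong) (simp add: rec_nat_mult)
qed

lemma recursive_power: "recursive n f \<Longrightarrow> recursive n g \<Longrightarrow> recursive n (\<lambda>xs. f xs ^ g xs)"
proof -
  assume "recursive n f" "recursive n g"
  then have "recursive n (\<lambda>xs. rec_nat 1 (\<lambda>k acc. acc * f xs) (g xs))"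
    by (intro recursive_rec_nat recursive_mult recursive_const recursive_hd_tl recursive_tl2)
  then show ?thesis by (rule recursive_cong) (simp add: rec_nat_power)
qed

lemma recursive_sum:
  assumes "recursive (Suc n) (\<lambda>ys. F (hd ys) (tl ys))" "recursive n B"
  shows "recursive n (\<lambda>xs. \<Sum>i<B xs. F i xs)"
proof -
  have "recursive (Suc (Suc n)) (\<lambda>ys. hd (tl ys) + F (hd ys) (tl (tl ys)))"
    using recursive_add[OF recursive_hd_tl recursive_drop_second[OF assms(1)]] .
  then have "recursive n (\<lambda>xs. rec_nat 0 (\<lambda>k acc. acc + F k xs) (B xs))"
    by (intro recursive_rec_nat recursive_const assms(2)) simp
  then show ?thesis by (rule recursive_cong) (simp add: rec_nat_sum)
qed

lemma decidable_bounded_all: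
  assumes "decidable (Suc n) (\<lambda>ys. P (hd ys) (tl ys))" "recursive n B"
  shows "decidable n (\<lambda>xs. \<forall>i<B xs. P i xs)"
proof -
  have "recursive (Suc (Suc n)) (\<lambda>ys. hd (tl ys) * (if P (hd ys) (tl (tl ys)) then 1 else 0))"
    using recursive_mult[OF recursive_hd_tl recursive_drop_second[where F="\<lambda>i xs. if P i xs then 1 else 0"]]
      assms(1) unfolding decidable_def by simp
  then have "recursive n (\<lambda>xs. rec_nat 1 (\<lambda>k acc. acc * (if P k xs then 1 else 0)) (B xs))"
    by (intro recursive_rec_nat recursive_const assms(2)) simp
  then show ?thesis unfolding decidable_def by (rule recursive_cong) (simp add: rec_nat_all)
qed

lemma recursive_Least:
  assumes "decidable (Suc n) (\<lambda>ys. P (hd ys) (tl ys))" "\<And>xs. length xs = n \<Longrightarrow> \<exists>y. P y xs"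
  shows "recursive n (\<lambda>xs. LEAST y. P y xs)"
proof -
  have "recursive (Suc n) (\<lambda>ys. 1 - (if P (hd ys) (tl ys) then 1 else 0))"
    using assms(1) unfolding decidable_def by (intro recursive_sub recursive_const)
  then have "recursive n (\<lambda>xs. LEAST y. 1 - (if P y xs then 1 else 0::nat) = 0)"
    using recursive_minimization[of n "\<lambda>ys. 1 - (if P (hd ys) (tl ys) then 1 else 0)"] assms(2) by simp
  moreover have "(Suc 0 \<le> (if Q then 1 else 0::nat)) = Q" for Q by simp
  ultimately show ?thesis by simp
qed

lemma decidable_eq: "recursive n f \<Longrightarrow> recursive n g \<Longrightarrow> decidable n (\<lambda>xs. f xs = g xs)"
proof -
  assume "recursive n f" "recursive n g"
  then have "recursive n (\<lambda>xs. 1 - ((f xs - g xs) + (g xs - f xs)))"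
    by (intro recursive_sub recursive_add recursive_const)
  then show ?thesis unfolding decidable_def by (rule recursive_cong) auto
qed

lemma decidable_le: "recursive n f \<Longrightarrow> recursive n g \<Longrightarrow> decidable n (\<lambda>xs. f xs \<le> g xs)"
proof -
  assume "recursive n f" "recursive n g"
  then have "recursive n (\<lambda>xs. 1 - (f xs - g xs))"
    by (intro recursive_sub recursive_const)
  then show ?thesis unfolding decidable_def by (rule recursive_cong) auto
qed

lemma decidable_less: "recursive n f \<Longrightarrow> recursive n g \<Longrightarrow> decidable n (\<lambda>xs. f xs < g xs)"
proof -
  assume "recursive n f" "recursive n g"
  then have "recursive n (\<lambda>xs. 1 - (Suc (f xs) - g xs))"
    by (intro recursive_sub recursive_const recursive_Suc)
  then show ?thesis unfolding decidable_def by (rule recursive_cong) auto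
qed

lemma decidable_not: "decidable n P \<Longrightarrow> decidable n (\<lambda>xs. \<not> P xs)"
proof -
  assume "decidable n P"
  then have "recursive n (\<lambda>xs. 1 - (if P xs then 1 else 0))"
    unfolding decidable_def by (intro recursive_sub recursive_const)
  then show ?thesis unfolding decidable_def by (rule recursive_cong) auto
qed

lemma decidable_conj: "decidable n P \<Longrightarrow> decidable n Q \<Longrightarrow> decidable n (\<lambda>xs. P xs \<and> Q xs)"
proof -
  assume "decidable n P" "decidable n Q"
  then have "recursive n (\<lambda>xs. (if P xs then 1 else 0) * (if Q xs then 1 else 0))"
    unfolding decidable_def by (intro recursive_mult)
  then show ?thesis unfolding decidable_def by (rule recursive_cong) auto
qed

lemma decidable_disj: "decidable n P \<Longrightarrow> decidable n Q \<Longrightarrow> decidable n (\<lambda>xs. P xs \<or> Q xs)"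
proof -
  assume "decidable n P" "decidable n Q"
  then have "decidable n (\<lambda>xs. \<not> (\<not> P xs \<and> \<not> Q xs))" by (intro decidable_not decidable_conj)
  then show ?thesis by simp
qed

lemma decidable_imp: "decidable n P \<Longrightarrow> decidable n Q \<Longrightarrow> decidable n (\<lambda>xs. P xs \<longrightarrow> Q xs)"
proof -
  assume "decidable n P" "decidable n Q"
  then have "decidable n (\<lambda>xs. \<not> P xs \<or> Q xs)" by (intro decidable_not decidable_disj)
  then show ?thesis by simp
qed

lemma recursive_if:
  "decidable n P \<Longrightarrow> recursive n f \<Longrightarrow> recursive n g \<Longrightarrow> recursive n (\<lambda>xs. if P xs then f xs else g xs)"
proof -
  assume "decidable n P" "recursive n f" "recursive n g"
  then have "recursive n (\<lambda>xs. (if P xs then 1 else 0) * f xs + (1 - (if P xs then 1 else 0)) * g xs)"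
    unfolding decidable_def by (intro recursive_add recursive_mult recursive_sub recursive_const)
  then show ?thesis by (rule recursive_cong) auto
qed

lemma decidable_bounded_ex:
  assumes "decidable (Suc n) (\<lambda>ys. P (hd ys) (tl ys))" "recursive n B"
  shows "decidable n (\<lambda>xs. \<exists>i<B xs. P i xs)"
proof -
  have "decidable n (\<lambda>xs. \<not> (\<forall>i<B xs. \<not> P i xs))"
    using assms by (intro decidable_not decidable_bounded_all)
  then show ?thesis by simp
qed

text \<open>Minimisation in recfn must be regular, so searches are made total by a bound B.\<close>

lemma recursive_bounded_Least:
  assumes "decidable (Suc n) (\<lambda>ys. P (hd ys) (tl ys))" "recursive n B"
  shows "recursive n (\<lambda>xs. LEAST y. y = B xs \<or> P y xs)"
  by (rule recursive_Least) (auto intro!: decidable_disj decidable_eq recursive_hd recursive_tl assms)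

lemmas recursive_intros =
  recursive_add recursive_sub recursive_mult recursive_power recursive_if recursive_sum
  recursive_bounded_Least recursive_Suc recursive_const recursive_hd recursive_hd_tl recursive_hd_tl2
  decidable_eq decidable_le decidable_less decidable_not decidable_conj decidable_disj decidable_imp
  decidable_bounded_all decidable_bounded_ex

lemma div_Least: "0 < (y::nat) \<Longrightarrow> x div y = (LEAST q. q = x \<or> x < y * Suc q)"
proof (rule Least_equality[symmetric])
  assume y: "0 < y"
  show "x div y = x \<or> x < y * Suc (x div y)"
    using y by (metis dividend_less_times_div mult_Suc_right)
  fix q assume "q = x \<or> x < y * Suc q"
  then show "x div y \<le> q"
  proof
    assume "q = x" then show ?thesis by simp
  next
    assume "x < y * Suc q"
    then have "x div y < Suc q" using y by (simp add: div_less_iff_less_mult mult.commute)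
    then show ?thesis by simp
  qed
qed

lemma recursive_div: "recursive n f \<Longrightarrow> recursive n g \<Longrightarrow> recursive n (\<lambda>xs. f xs div g xs)"
proof -
  assume f: "recursive n f" and g: "recursive n g"
  have "recursive n (\<lambda>xs. if g xs = 0 then 0 else LEAST q. q = f xs \<or> f xs < g xs * Suc q)"
    using f g by (intro recursive_intros recursive_tl) 
  then show ?thesis by (rule recursive_cong) (simp add: div_Least)
qed

lemma recursive_mod: "recursive n f \<Longrightarrow> recursive n g \<Longrightarrow> recursive n (\<lambda>xs. f xs mod g xs)"
proof -
  assume f: "recursive n f" and g: "recursive n g"
  have "recursive n (\<lambda>xs. f xs - g xs * (f xs div g xs))"
    using f g by (intro recursive_intros recursive_div)
  then show ?thesis by (rule recursive_cong) (simp add: minus_mult_div_eq_mod)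
qed

lemma recursive_prod_encode:
  "recursive n f \<Longrightarrow> recursive n g \<Longrightarrow> recursive n (\<lambda>xs. prod_encode (f xs, g xs))"
proof -
  assume f: "recursive n f" and g: "recursive n g"
  have "recursive n (\<lambda>xs. (f xs + g xs) * Suc (f xs + g xs) div 2 + f xs)"
    using f g by (intro recursive_intros recursive_div)
  then show ?thesis by (rule recursive_cong) (simp add: prod_encode_def triangle_def)
qed

lemma fst_prod_decode_Least:
  "fst (prod_decode k) = (LEAST a. a = k \<or> (\<exists>b<Suc k. prod_encode (a, b) = k))"
proof (rule Least_equality[symmetric])
  obtain a0 b0 where d: "prod_decode k = (a0, b0)" by (cases "prod_decode k")
  then have e: "prod_encode (a0, b0) = k" by (metis prod_decode_inverse)
  then have "b0 < Suc k" using le_prod_encode_2[of b0 a0] by simp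
  with e d show "fst (prod_decode k) = k \<or> (\<exists>b<Suc k. prod_encode (fst (prod_decode k), b) = k)" by auto
  fix y assume "y = k \<or> (\<exists>b<Suc k. prod_encode (y, b) = k)"
  then show "fst (prod_decode k) \<le> y"
  proof
    assume "y = k" then show ?thesis using le_prod_encode_1[of a0 b0] e d by simp
  next
    assume "\<exists>b<Suc k. prod_encode (y, b) = k"
    then obtain b where "prod_encode (y, b) = k" by auto
    then show ?thesis using d e by auto
  qed
qed

lemma snd_prod_decode_Least:
  "snd (prod_decode k) = (LEAST b. b = k \<or> (\<exists>a<Suc k. prod_encode (a, b) = k))"
proof (rule Least_equality[symmetric])
  obtain a0 b0 where d: "prod_decode k = (a0, b0)" by (cases "prod_decode k")
  then have e: "prod_encode (a0, b0) = k" by (metis prod_decode_inverse)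
  then have "a0 < Suc k" using le_prod_encode_1[of a0 b0] by simp
  with e d show "snd (prod_decode k) = k \<or> (\<exists>a<Suc k. prod_encode (a, snd (prod_decode k)) = k)" by auto
  fix y assume "y = k \<or> (\<exists>a<Suc k. prod_encode (a, y) = k)"
  then show "snd (prod_decode k) \<le> y"
  proof
    assume "y = k" then show ?thesis using le_prod_encode_2[of b0 a0] e d by simp
  next
    assume "\<exists>a<Suc k. prod_encode (a, y) = k"
    then obtain a where "prod_encode (a, y) = k" by auto
    then show ?thesis using d e by auto
  qed
qed

lemma recursive_fst_prod_decode: "recursive n f \<Longrightarrow> recursive n (\<lambda>xs. fst (prod_decode (f xs)))"
proof -
  assume f: "recursive n f"
  have "recursive n (\<lambda>xs. LEAST a. a = f xs \<or> (\<exists>b<Suc (f xs). prod_encode (a, b) = f xs))"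
    using f by (intro recursive_intros recursive_tl recursive_tl2 recursive_prod_encode)
  then show ?thesis by (rule recursive_cong) (simp only: fst_prod_decode_Least)
qed

lemma recursive_snd_prod_decode: "recursive n f \<Longrightarrow> recursive n (\<lambda>xs. snd (prod_decode (f xs)))"
proof -
  assume f: "recursive n f"
  have "recursive n (\<lambda>xs. LEAST b. b = f xs \<or> (\<exists>a<Suc (f xs). prod_encode (a, b) = f xs))"
    using f by (intro recursive_intros recursive_tl recursive_tl2 recursive_prod_encode)
  then show ?thesis by (rule recursive_cong) (simp only: snd_prod_decode_Least)
qed

definition code_hd :: "nat \<Rightarrow> nat" where "code_hd c = fst (prod_decode (c - 1))"

definition code_tl :: "nat \<Rightarrow> nat" where "code_tl c = snd (prod_decode (c - 1))"

lemma code_hd_Suc_prod_encode [simp]: "code_hd (Suc (prod_encode (x, y))) = x"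
  by (simp add: code_hd_def)

lemma code_tl_Suc_prod_encode [simp]: "code_tl (Suc (prod_encode (x, y))) = y"
  by (simp add: code_tl_def)

lemma code_tl_0 [simp]: "code_tl 0 = 0"
  by (simp add: code_tl_def prod_decode_def prod_decode_aux.simps)

lemma funpow_code_tl_list_encode: "(code_tl ^^ k) (list_encode l) = list_encode (drop k l)"
proof (induction k arbitrary: l)
  case 0 then show ?case by simp
next
  case (Suc k)
  show ?case
  proof (cases l)
    case Nil then show ?thesis
      by (simp add: funpow_swap1) (induction k, auto)
  next
    case (Cons y ys) then show ?thesis by (simp add: funpow_swap1 Suc)
  qed
qed

lemma recursive_code_hd: "recursive n f \<Longrightarrow> recursive n (\<lambda>xs. code_hd (f xs))"
  unfolding code_hd_def by (intro recursive_fst_prod_decode recursive_sub recursive_const)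

lemma recursive_code_tl: "recursive n f \<Longrightarrow> recursive n (\<lambda>xs. code_tl (f xs))"
  unfolding code_tl_def by (intro recursive_snd_prod_decode recursive_sub recursive_const)

lemma rec_nat_funpow: "rec_nat c (\<lambda>k acc. code_tl acc) k = (code_tl ^^ k) c"
  by (induction k) auto

lemma recursive_funpow_code_tl:
  "recursive n f \<Longrightarrow> recursive n g \<Longrightarrow> recursive n (\<lambda>xs. (code_tl ^^ g xs) (f xs))"
proof -
  assume f: "recursive n f" and g: "recursive n g"
  have "recursive n (\<lambda>xs. rec_nat (f xs) (\<lambda>k acc. code_tl acc) (g xs))"
    using f g by (intro recursive_rec_nat recursive_code_tl recursive_hd_tl)
  then show ?thesis by (rule recursive_cong) (simp add: rec_nat_funpow)
qed

definition code_nth :: "nat \<Rightarrow> nat \<Rightarrow> nat" where "code_nth c i = code_hd ((code_tl ^^ i) c)"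

lemma code_nth_list_encode: "i < length l \<Longrightarrow> code_nth (list_encode l) i = l ! i"
  unfolding code_nth_def funpow_code_tl_list_encode by (simp add: Cons_nth_drop_Suc[symmetric])

lemma recursive_code_nth: "recursive n f \<Longrightarrow> recursive n g \<Longrightarrow> recursive n (\<lambda>xs. code_nth (f xs) (g xs))"
  unfolding code_nth_def by (intro recursive_code_hd recursive_funpow_code_tl)

definition code_length :: "nat \<Rightarrow> nat" where "code_length c = (LEAST i. i = c \<or> (code_tl ^^ i) c = 0)"

lemma length_le_list_encode: "length l \<le> list_encode l"
  by (induction l) (auto, metis le_prod_encode_2 order_trans)

lemma code_length_list_encode: "code_length (list_encode l) = length l"
  unfolding code_length_def
proof (rule Least_equality)
  show "length l = list_encode l \<or> (code_tl ^^ length l) (list_encode l) = 0"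
    by (simp add: funpow_code_tl_list_encode)
  fix y assume "y = list_encode l \<or> (code_tl ^^ y) (list_encode l) = 0"
  then show "length l \<le> y"
  proof
    assume "y = list_encode l" then show ?thesis using length_le_list_encode by simp
  next
    assume "(code_tl ^^ y) (list_encode l) = 0"
    then have "list_encode (drop y l) = 0" by (simp add: funpow_code_tl_list_encode)
    then have "drop y l = []" by (metis list_encode_inverse list_decode.simps(1))
    then show ?thesis by simp
  qed
qed

lemma recursive_code_length: "recursive n f \<Longrightarrow> recursive n (\<lambda>xs. code_length (f xs))"
  unfolding code_length_def by (intro recursive_intros recursive_tl recursive_funpow_code_tl)

lemma rec_nat_list_encode:
  "k \<le> j \<Longrightarrow>
    rec_nat 0 (\<lambda>k acc. Suc (prod_encode (F (j - Suc k), acc))) k = list_encode (map F [j - k..<j])"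
proof (induction k)
  case 0 then show ?case by simp
next
  case (Suc k)
  then have "[j - Suc k..<j] = (j - Suc k) # [j - k..<j]"
    by (metis Suc_diff_Suc Suc_le_lessD diff_less_Suc upt_conv_Cons zero_less_Suc diff_less
        order_less_le_trans)
  with Suc show ?case by simp
qed

lemma recursive_list_encode_map: "recursive (Suc n) (\<lambda>ys. F (hd ys) (tl ys)) \<Longrightarrow> recursive n J
   \<Longrightarrow> recursive n (\<lambda>xs. list_encode (map (\<lambda>i. F i xs) [0..<J xs]))"
proof -
  assume F: "recursive (Suc n) (\<lambda>ys. F (hd ys) (tl ys))" and J: "recursive n J"
  have "recursive (Suc (Suc n)) (\<lambda>ys. F (J (tl (tl ys)) - Suc (hd ys)) (tl (tl ys)))"
    by (rule recursive_subst_hd[OF F]) (intro recursive_intros recursive_tl2 J)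
  then have "recursive (Suc (Suc n))
      (\<lambda>ys. Suc (prod_encode (F (J (tl (tl ys)) - Suc (hd ys)) (tl (tl ys)), hd (tl ys))))"
    by (intro recursive_Suc recursive_prod_encode recursive_hd_tl)
  then have "recursive n (\<lambda>xs. rec_nat 0 (\<lambda>k acc. Suc (prod_encode (F (J xs - Suc k) xs, acc))) (J xs))"
    by (intro recursive_rec_nat recursive_const J) simp
  then show ?thesis
  proof (rule recursive_cong)
    fix xs :: "nat list"
    show "rec_nat 0 (\<lambda>k acc. Suc (prod_encode (F (J xs - Suc k) xs, acc))) (J xs) =
          list_encode (map (\<lambda>i. F i xs) [0..<J xs])"
      using rec_nat_list_encode[OF order_refl, where j="J xs" and F="\<lambda>i. F i xs"] by simp
  qed
qed

lemma decidable_even: "recursive n f \<Longrightarrow> decidable n (\<lambda>xs. even (f xs))"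
proof -
  assume f: "recursive n f"
  have "decidable n (\<lambda>xs. f xs mod 2 = 0)" using f by (intro decidable_eq recursive_mod recursive_const)
  then show ?thesis by (rule decidable_cong) (simp add: even_iff_mod_2_eq_zero)
qed

lemma recursive_min: "recursive n f \<Longrightarrow> recursive n g \<Longrightarrow> recursive n (\<lambda>xs. min (f xs) (g xs))"
proof -
  assume "recursive n f" "recursive n g"
  then have "recursive n (\<lambda>xs. if f xs \<le> g xs then f xs else g xs)" by (intro recursive_intros)
  then show ?thesis by (rule recursive_cong) (simp add: min_def)
qed

lemma decidable_bit: "recursive n f \<Longrightarrow> recursive n g \<Longrightarrow> decidable n (\<lambda>xs. bit (f xs) (g xs))"
proof -
  assume "recursive n f" "recursive n g"
  then have "decidable n (\<lambda>xs. \<not> even (f xs div 2 ^ g xs))"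
    by (intro decidable_not decidable_even recursive_div recursive_power recursive_const)
  then show ?thesis by (rule decidable_cong) (simp add: bit_iff_odd)
qed

definition rat_code_le :: "nat \<Rightarrow> nat \<Rightarrow> nat \<Rightarrow> bool" where
  "rat_code_le c k N \<longleftrightarrow>
     fst (prod_decode c) * 2 ^ N
       \<le> fst (prod_decode (snd (prod_decode c))) * 2 ^ N
          + k * (snd (prod_decode (snd (prod_decode c))) + 1)"

lemma rat_code_le_iff: "rat_code_le c k N \<longleftrightarrow> rat_of_code c \<le> k / 2 ^ N"
proof -
  obtain a b d where c: "prod_decode c = (a, prod_encode (b, d))"
    by (metis prod_decode_inverse prod.collapse)
  have "rat_code_le c k N \<longleftrightarrow> real (a * 2 ^ N) \<le> real (b * 2 ^ N + k * (d + 1))"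
    unfolding rat_code_le_def c by (simp only: of_nat_le_iff) simp
  also have "\<dots> \<longleftrightarrow> (real a - real b) / (real d + 1) \<le> k / 2 ^ N"
    by (simp add: field_simps)
  finally show ?thesis by (simp add: rat_of_code_def c)
qed

lemma decidable_rat_code_le:
  "recursive n c \<Longrightarrow> recursive n k \<Longrightarrow> recursive n N \<Longrightarrow>
    decidable n (\<lambda>xs. rat_code_le (c xs) (k xs) (N xs))"
  unfolding rat_code_le_def
  by (intro decidable_le recursive_add recursive_mult recursive_power recursive_const
      recursive_fst_prod_decode recursive_snd_prod_decode)

section \<open>The majority vote\<close>

text \<open>In the following, uc codes the prefix of length m of a name p of the input, w is the
binary number whose digits are a prefix of length L of a path q, n is the precision asked for,
a is an associate of the reduction's outer map and h computes approximations of the distances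
of the dense sequence. Digit n + 4 of a name is within 2^-(n+4) of the named point, which
leaves room for the inaccuracy of the distance test.\<close>

definition pair_entry :: "nat \<Rightarrow> nat \<Rightarrow> nat \<Rightarrow> nat" where
  "pair_entry uc w i = (if even i then code_nth uc (i div 2) else if bit w (i div 2) then 1 else 0)"

definition query :: "nat \<Rightarrow> nat \<Rightarrow> nat \<Rightarrow> nat \<Rightarrow> nat" where
  "query n uc w j = list_encode ((n + 4) # map (pair_entry uc w) [0..<j])"

definition known_length :: "nat \<Rightarrow> nat \<Rightarrow> nat" where
  "known_length m L = 2 * min m L"

definition halts_on :: "(nat \<Rightarrow> nat) \<Rightarrow> nat \<Rightarrow> nat \<Rightarrow> nat \<Rightarrow> nat \<Rightarrow> nat \<Rightarrow> bool" where
  "halts_on a n uc m L w \<longleftrightarrow> (\<exists>j<Suc (known_length m L). 0 < a (query n uc w j))"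

definition digit :: "(nat \<Rightarrow> nat) \<Rightarrow> nat \<Rightarrow> nat \<Rightarrow> nat \<Rightarrow> nat \<Rightarrow> nat \<Rightarrow> nat" where
  "digit a n uc m L w =
     a (query n uc w (LEAST j. j = known_length m L \<or> 0 < a (query n uc w j))) - 1"

definition near :: "(nat \<Rightarrow> nat) \<Rightarrow> nat \<Rightarrow> nat \<Rightarrow> nat \<Rightarrow> bool" where
  "near h n i j \<longleftrightarrow> rat_code_le (h (prod_encode (prod_encode (i, j), n + 6))) 9 (n + 6)"

text \<open>The bits of S select the voters among the words of length L.\<close>

definition valid_vote :: "(nat \<Rightarrow> nat) \<Rightarrow> (nat \<Rightarrow> nat) \<Rightarrow> nat \<Rightarrow> nat \<Rightarrow> nat \<Rightarrow> nat \<Rightarrow> nat \<Rightarrow> bool" where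
  "valid_vote a h n uc m L S \<longleftrightarrow>
     (2::nat) ^ L < 2 * (\<Sum>w<2 ^ L. if bit S w then 1 else 0) \<and>
     (\<forall>w<2 ^ L. bit S w \<longrightarrow> halts_on a n uc m L w) \<and>
     (\<forall>w<2 ^ L. \<forall>w'<2 ^ L. bit S w \<and> bit S w' \<longrightarrow>
        near h n (digit a n uc m L w) (digit a n uc m L w'))"

definition vote_value :: "(nat \<Rightarrow> nat) \<Rightarrow> nat \<Rightarrow> nat \<Rightarrow> nat \<Rightarrow> nat \<Rightarrow> nat \<Rightarrow> nat" where
  "vote_value a n uc m L S = digit a n uc m L (LEAST w. w = 2 ^ L \<or> bit S w)"

definition first_vote :: "(nat \<Rightarrow> nat) \<Rightarrow> (nat \<Rightarrow> nat) \<Rightarrow> nat \<Rightarrow> nat \<Rightarrow> nat \<Rightarrow> nat" where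
  "first_vote a h n uc m =
     (LEAST t. t = m \<or> valid_vote a h n uc m (fst (prod_decode t)) (snd (prod_decode t)))"

text \<open>An associate in the sense of kleene_app: on a query consisting of n and a prefix of p
it answers 0 until a vote coded by a number below the length of the prefix is found.\<close>

definition majority_vote :: "(nat \<Rightarrow> nat) \<Rightarrow> (nat \<Rightarrow> nat) \<Rightarrow> nat \<Rightarrow> nat" where
  "majority_vote a h x =
     (if first_vote a h (code_hd x) (code_tl x) (code_length (code_tl x)) < code_length (code_tl x)
      then Suc (vote_value a (code_hd x) (code_tl x) (code_length (code_tl x))
        (fst (prod_decode (first_vote a h (code_hd x) (code_tl x) (code_length (code_tl x)))))
        (snd (prod_decode (first_vote a h (code_hd x) (code_tl x) (code_length (code_tl x))))))
      else 0)"

lemma majority_vote_list_encode: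
  "majority_vote a h (list_encode (n # map p [0..<m])) =
     (let uc = list_encode (map p [0..<m]); t = first_vote a h n uc m
      in if t < m then Suc (vote_value a n uc m (fst (prod_decode t)) (snd (prod_decode t))) else 0)"
  unfolding majority_vote_def by (simp add: code_length_list_encode Let_def)

lemma recursive_pair_entry:
  "recursive n e1 \<Longrightarrow> recursive n e2 \<Longrightarrow> recursive n e3 \<Longrightarrow>
    recursive n (\<lambda>xs. pair_entry (e1 xs) (e2 xs) (e3 xs))"
  unfolding pair_entry_def
  by (intro recursive_intros decidable_even decidable_bit recursive_code_nth recursive_div)

lemma recursive_query:
  "recursive n e1 \<Longrightarrow> recursive n e2 \<Longrightarrow> recursive n e3 \<Longrightarrow> recursive n e4 \<Longrightarrow>
    recursive n (\<lambda>xs. query (e1 xs) (e2 xs) (e3 xs) (e4 xs))"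
  unfolding query_def list_encode.simps
  by (intro recursive_Suc recursive_prod_encode recursive_add recursive_const recursive_list_encode_map
      recursive_pair_entry recursive_tl recursive_hd)

lemma recursive_known_length:
  "recursive n e1 \<Longrightarrow> recursive n e2 \<Longrightarrow> recursive n (\<lambda>xs. known_length (e1 xs) (e2 xs))"
  unfolding known_length_def by (intro recursive_intros recursive_min)

context
  fixes a h :: "nat \<Rightarrow> nat"
  assumes computable_a: "total_computable a" and computable_h: "total_computable h"
begin

lemma recursive_comp_a: "recursive n e \<Longrightarrow> recursive n (\<lambda>xs. a (e xs))"
  using recursive_comp1 computable_a unfolding total_computable_iff_recursive by blast

lemma recursive_comp_h: "recursive n e \<Longrightarrow> recursive n (\<lambda>xs. h (e xs))"
  using recursive_comp1 computable_h unfolding total_computable_iff_recursive by blast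

lemma decidable_halts_on:
  "recursive n e1 \<Longrightarrow> recursive n e2 \<Longrightarrow> recursive n e3 \<Longrightarrow> recursive n e4 \<Longrightarrow> recursive n e5 \<Longrightarrow>
    decidable n (\<lambda>xs. halts_on a (e1 xs) (e2 xs) (e3 xs) (e4 xs) (e5 xs))"
  unfolding halts_on_def
  by (intro recursive_intros recursive_comp_a recursive_query recursive_known_length recursive_tl)

lemma recursive_digit:
  "recursive n e1 \<Longrightarrow> recursive n e2 \<Longrightarrow> recursive n e3 \<Longrightarrow> recursive n e4 \<Longrightarrow> recursive n e5 \<Longrightarrow>
    recursive n (\<lambda>xs. digit a (e1 xs) (e2 xs) (e3 xs) (e4 xs) (e5 xs))"
  unfolding digit_def
  by (intro recursive_intros recursive_comp_a recursive_query recursive_known_length recursive_tl)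

lemma decidable_near:
  "recursive n e1 \<Longrightarrow> recursive n e2 \<Longrightarrow> recursive n e3 \<Longrightarrow>
    decidable n (\<lambda>xs. near h (e1 xs) (e2 xs) (e3 xs))"
  unfolding near_def
  by (intro decidable_rat_code_le recursive_comp_h recursive_prod_encode recursive_add recursive_const)

lemma decidable_valid_vote:
  "recursive n e1 \<Longrightarrow> recursive n e2 \<Longrightarrow> recursive n e3 \<Longrightarrow> recursive n e4 \<Longrightarrow> recursive n e5 \<Longrightarrow>
    decidable n (\<lambda>xs. valid_vote a h (e1 xs) (e2 xs) (e3 xs) (e4 xs) (e5 xs))"
  unfolding valid_vote_def
  by (intro recursive_intros decidable_bit decidable_halts_on decidable_near recursive_digit recursive_tl)

lemma recursive_vote_value:
  "recursive n e1 \<Longrightarrow> recursive n e2 \<Longrightarrow> recursive n e3 \<Longrightarrow> recursive n e4 \<Longrightarrow> recursive n e5 \<Longrightarrow>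
    recursive n (\<lambda>xs. vote_value a (e1 xs) (e2 xs) (e3 xs) (e4 xs) (e5 xs))"
  unfolding vote_value_def by (intro recursive_intros decidable_bit recursive_digit recursive_tl)

lemma recursive_first_vote:
  "recursive n e1 \<Longrightarrow> recursive n e2 \<Longrightarrow> recursive n e3 \<Longrightarrow>
    recursive n (\<lambda>xs. first_vote a h (e1 xs) (e2 xs) (e3 xs))"
  unfolding first_vote_def
  by (intro recursive_intros decidable_valid_vote recursive_fst_prod_decode recursive_snd_prod_decode
      recursive_tl)

lemma total_computable_majority_vote: "total_computable (majority_vote a h)"
  unfolding total_computable_iff_recursive majority_vote_def One_nat_def
  by (intro recursive_intros recursive_first_vote recursive_vote_value recursive_code_hd recursive_code_tl
      recursive_code_length recursive_fst_prod_decode recursive_snd_prod_decode)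

end

section \<open>Words, cylinders and the uniform measure\<close>

definition bits :: "nat \<Rightarrow> nat \<Rightarrow> bool list" where
  "bits L w = map (bit w) [0..<L]"

definition cylinder :: "bool list \<Rightarrow> (nat \<Rightarrow> bool) set" where
  "cylinder v = {q. map q [0..<length v] = v}"

lemma length_bits [simp]: "length (bits L w) = L"
  by (simp add: bits_def)

lemma inj_on_bits: "inj_on (bits L) {..<2 ^ L}"
proof (rule inj_onI)
  fix w w' :: nat assume w: "w \<in> {..<2 ^ L}" "w' \<in> {..<2 ^ L}" and eq: "bits L w = bits L w'"
  show "w = w'"
  proof (rule bit_eqI)
    fix i
    show "bit w i = bit w' i"
    proof (cases "i < L")
      case True
      then show ?thesis using arg_cong[OF eq, of "\<lambda>v. v ! i"] by (simp add: bits_def)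
    next
      case False
      then have "(2::nat) ^ L \<le> 2 ^ i" by simp
      then have "w < 2 ^ i" "w' < 2 ^ i" using w by (meson lessThan_iff less_le_trans)+
      then show ?thesis by (simp add: bit_iff_odd)
    qed
  qed
qed

lemma bits_surj:
  assumes "length v = L"
  shows "\<exists>w<2 ^ L. bits L w = v"
proof -
  have "bits L ` {..<2 ^ L} = {v. length v = L}"
  proof (rule card_subset_eq)
    show "finite {v::bool list. length v = L}" "bits L ` {..<2 ^ L} \<subseteq> {v. length v = L}"
      using finite_lists_length_eq[of "UNIV :: bool set" L] by auto
    show "card (bits L ` {..<2 ^ L}) = card {v::bool list. length v = L}"
      using card_lists_length_eq[of "UNIV :: bool set" L] card_image[OF inj_on_bits[of L]] by simp
  qed
  then have "v \<in> bits L ` {..<2 ^ L}" using assms by simp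
  then show ?thesis by auto
qed

lemma prob_space_cantor_measure: "prob_space cantor_measure"
  unfolding cantor_measure_def by (rule prob_space_PiM) (rule prob_space_measure_pmf)

lemma space_cantor_measure: "space cantor_measure = UNIV"
  by (auto simp: cantor_measure_def space_PiM)

lemma mem_cylinder_iff: "q \<in> cylinder v \<longleftrightarrow> (\<forall>i<length v. q i = v ! i)"
proof
  assume "q \<in> cylinder v"
  then have eq: "map q [0..<length v] = v" by (simp add: cylinder_def)
  show "\<forall>i<length v. q i = v ! i"
  proof (intro allI impI)
    fix i assume "i < length v"
    then show "q i = v ! i" using arg_cong[OF eq, of "\<lambda>l. l ! i"] by simp
  qed
next
  assume "\<forall>i<length v. q i = v ! i"
  then show "q \<in> cylinder v"
    unfolding cylinder_def by (auto intro: map_upt_eqI)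
qed

lemma cylinder_eq_prod_emb:
  "cylinder v = prod_emb UNIV (\<lambda>_. measure_pmf (bernoulli_pmf (1/2))) {..<length v}
     (\<Pi>\<^sub>E i\<in>{..<length v}. {v ! i})"
  by (rule set_eqI) (auto simp: mem_cylinder_iff prod_emb_iff restrict_PiE_iff Pi_iff)

lemma cylinder_in_sets: "cylinder v \<in> sets cantor_measure"
  unfolding cylinder_eq_prod_emb cantor_measure_def by (rule sets_PiM_I) simp_all

lemma emeasure_cylinder: "emeasure cantor_measure (cylinder v) = ennreal ((1/2) ^ length v)"
proof -
  have "emeasure cantor_measure (cylinder v)
      = (\<Prod>i<length v. emeasure (measure_pmf (bernoulli_pmf (1/2))) {v ! i})"
    unfolding cylinder_eq_prod_emb cantor_measure_def
    by (rule emeasure_PiM_emb, rule prob_space_measure_pmf) simp_all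
  also have "\<dots> = (\<Prod>i<length v. ennreal (1/2))"
    by (rule prod.cong) (simp_all add: emeasure_pmf_single)
  also have "\<dots> = ennreal (1/2) ^ length v"
    by (simp only: prod_constant card_lessThan)
  also have "\<dots> = ennreal ((1/2) ^ length v)"
    by (rule ennreal_power) simp
  finally show ?thesis .
qed

lemma measure_UN_cylinders_bits:
  assumes "W \<subseteq> {..<2 ^ L}"
  shows "measure cantor_measure (\<Union>w\<in>W. cylinder (bits L w)) = card W / 2 ^ L"
proof -
  have W: "finite W" "inj_on (bits L) W"
    using assms finite_subset inj_on_subset[OF inj_on_bits] by auto
  have "measure cantor_measure (\<Union>w\<in>W. cylinder (bits L w))
      = (\<Sum>w\<in>W. measure cantor_measure (cylinder (bits L w)))"
  proof (rule measure_finite_Union)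
    show "disjoint_family_on (\<lambda>w. cylinder (bits L w)) W"
      using W(2) unfolding disjoint_family_on_def cylinder_def inj_on_def by auto
  qed (use W in \<open>auto simp: cylinder_in_sets emeasure_cylinder\<close>)
  also have "\<dots> = card W / 2 ^ L"
    by (simp add: measure_def emeasure_cylinder power_one_over)
  finally show ?thesis .
qed

lemma paths_in_sets: "paths T \<in> sets cantor_measure"
proof -
  have "paths T = (\<Inter>L. \<Union>v\<in>{v\<in>T. length v = L}. cylinder v)"
    unfolding paths_def cylinder_def by auto
  moreover have "(\<Union>v\<in>{v\<in>T. length v = L}. cylinder v) \<in> sets cantor_measure" for L
    using finite_lists_length_eq[of "UNIV :: bool set" L]
    by (intro sets.finite_UN cylinder_in_sets) (auto intro: finite_subset)
  ultimately show ?thesis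
    using space_cantor_measure by (auto intro: sets.countable_INT'')
qed

lemma (in prob_space) prob_gt_half_Int_nonempty:
  assumes "A \<in> events" "B \<in> events" "prob A > 1/2" "prob B > 1/2"
  shows "A \<inter> B \<noteq> {}"
proof
  assume "A \<inter> B = {}"
  with assms(1,2) have "prob (A \<union> B) = prob A + prob B"
    by (intro finite_measure_Union)
  with prob_le_1[of "A \<union> B"] assms(3,4) show False by simp
qed

lemma majority_meets_paths:
  assumes "measure cantor_measure (paths T) > 1/2" "W \<subseteq> {..<2 ^ L}" "2 ^ L < 2 * card W"
  shows "\<exists>q\<in>paths T. \<exists>w\<in>W. bits L w = map q [0..<L]"
proof -
  interpret prob_space cantor_measure by (rule prob_space_cantor_measure)
  have "real (2 ^ L) < 2 * real (card W)" using assms(3) by linarith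
  then have "prob (\<Union>w\<in>W. cylinder (bits L w)) > 1/2"
    using assms(2) by (simp add: measure_UN_cylinders_bits field_simps)
  moreover have "(\<Union>w\<in>W. cylinder (bits L w)) \<in> events"
    using assms(2) finite_subset by (intro sets.finite_UN cylinder_in_sets) auto
  ultimately have "paths T \<inter> (\<Union>w\<in>W. cylinder (bits L w)) \<noteq> {}"
    using prob_gt_half_Int_nonempty[OF paths_in_sets _ assms(1)] by blast
  then show ?thesis unfolding cylinder_def by (auto dest: sym)
qed

lemma majority_of_path_prefixes:
  assumes "measure cantor_measure (paths T) > 1/2"
  shows "2 ^ L < 2 * card {w. w < 2 ^ L \<and> (\<exists>q\<in>paths T. bits L w = map q [0..<L])}"
    (is "_ < 2 * card ?W")
proof -
  interpret prob_space cantor_measure by (rule prob_space_cantor_measure)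
  have W: "?W \<subseteq> {..<2 ^ L}" by auto
  have "paths T \<subseteq> (\<Union>w\<in>?W. cylinder (bits L w))"
  proof
    fix q assume "q \<in> paths T"
    moreover obtain w where "w < 2 ^ L" "bits L w = map q [0..<L]"
      using bits_surj[of "map q [0..<L]" L] by auto
    ultimately show "q \<in> (\<Union>w\<in>?W. cylinder (bits L w))" unfolding cylinder_def by auto
  qed
  moreover have "(\<Union>w\<in>?W. cylinder (bits L w)) \<in> events"
    using W finite_subset by (intro sets.finite_UN cylinder_in_sets) auto
  ultimately have "prob (paths T) \<le> prob (\<Union>w\<in>?W. cylinder (bits L w))"
    by (rule finite_measure_mono)
  also have "\<dots> = card ?W / 2 ^ L"
    by (rule measure_UN_cylinders_bits[OF W])
  finally have "1/2 < card ?W / 2 ^ L"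
    using assms by linarith
  then have "real (2 ^ L) < real (2 * card ?W)"
    by (simp add: field_simps)
  then show ?thesis by linarith
qed

section \<open>Compactness of the set of paths\<close>

lemma infinite_branch:
  assumes "P []" and "\<And>v. P v \<Longrightarrow> P (v @ [False]) \<or> P (v @ [True])"
  shows "\<exists>q. \<forall>n. P (map q [0..<n])"
proof -
  define next_word where "next_word v = (if P (v @ [False]) then v @ [False] else v @ [True])" for v
  define branch where "branch k = (next_word ^^ k) []" for k
  have branch_Suc: "\<exists>b. branch (Suc k) = branch k @ [b]" for k
    by (auto simp: branch_def next_word_def)
  have P_branch: "P (branch k)" for k
    by (induction k) (use assms in \<open>auto simp: branch_def next_word_def\<close>)
  have length_branch: "length (branch k) = k" for k
    by (induction k) (auto simp: branch_def next_word_def)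
  define q where "q i = branch (Suc i) ! i" for i
  have "map q [0..<k] = branch k" for k
  proof (induction k)
    case 0 show ?case by (simp add: branch_def)
  next
    case (Suc k)
    obtain b where b: "branch (Suc k) = branch k @ [b]" using branch_Suc by blast
    then have "q k = b" unfolding q_def using length_branch[of k] by (simp add: nth_append)
    with Suc b show ?case by simp
  qed
  with P_branch show ?thesis by metis
qed

lemma path_avoiding_upward_closed:
  fixes D :: "bool list \<Rightarrow> bool"
  assumes mono: "\<And>v u. D v \<Longrightarrow> D (v @ u)"
    and avoiding: "\<forall>L. \<exists>q\<in>paths T. \<not> D (map q [0..<L])"
  shows "\<exists>q\<in>paths T. \<forall>L. \<not> D (map q [0..<L])"
proof -
  have D_mono: "D (map q [0..<L'])" if "D (map q [0..<L])" "L \<le> L'" for q L L'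
    using mono[OF that(1), of "map q [L..<L']"] that(2)
    by (metis le_add_diff_inverse map_append upt_add_eq_append zero_le)
  define good where
    "good v \<longleftrightarrow> (\<forall>L. \<exists>q\<in>paths T. map q [0..<length v] = v \<and> \<not> D (map q [0..<L]))" for v
  have "good []" unfolding good_def using avoiding by simp
  moreover have "good (v @ [False]) \<or> good (v @ [True])" if "good v" for v
  proof (rule ccontr)
    assume "\<not> ?thesis"
    then obtain L0 L1 where
      L0: "\<And>q. q \<in> paths T \<Longrightarrow> map q [0..<Suc (length v)] = v @ [False] \<Longrightarrow> D (map q [0..<L0])" and
      L1: "\<And>q. q \<in> paths T \<Longrightarrow> map q [0..<Suc (length v)] = v @ [True] \<Longrightarrow> D (map q [0..<L1])"
      unfolding good_def by (auto simp del: upt_Suc)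
    obtain q where q: "q \<in> paths T" "map q [0..<length v] = v" "\<not> D (map q [0..<max L0 L1])"
      using \<open>good v\<close> unfolding good_def by blast
    have "D (map q [0..<(if q (length v) then L1 else L0)])"
      using L0[OF q(1)] L1[OF q(1)] q(2) by (cases "q (length v)") simp_all
    then have "D (map q [0..<max L0 L1])"
      by (rule D_mono) simp
    with q(3) show False ..
  qed
  ultimately obtain q where q: "\<And>n. good (map q [0..<n])"
    using infinite_branch[of good] by blast
  have prefix: "\<exists>q'\<in>paths T. map q' [0..<n] = map q [0..<n] \<and> \<not> D (map q' [0..<L])" for n L
    using q[of n] unfolding good_def by simp
  have "q \<in> paths T"
    unfolding paths_def
  proof (intro CollectI allI)
    fix n
    obtain q' where q': "q' \<in> paths T" "map q' [0..<n] = map q [0..<n]" using prefix[of n 0] by blast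
    from q'(1) have "map q' [0..<n] \<in> T" unfolding paths_def by blast
    then show "map q [0..<n] \<in> T" by (simp only: q'(2))
  qed
  moreover have "\<not> D (map q [0..<L])" for L
    using prefix[of L L] by (metis (no_types))
  ultimately show ?thesis by blast
qed

lemma paths_uniform_bound:
  fixes D :: "bool list \<Rightarrow> bool"
  assumes "\<And>v u. D v \<Longrightarrow> D (v @ u)" and "\<forall>q\<in>paths T. \<exists>L. D (map q [0..<L])"
  shows "\<exists>L. \<forall>q\<in>paths T. D (map q [0..<L])"
  using path_avoiding_upward_closed[of D T] assms by blast

section \<open>Correctness of the majority vote\<close>

definition cantor_name :: "(nat \<Rightarrow> bool) \<Rightarrow> baire" where
  "cantor_name q i = (if q i then 1 else 0)"

lemma cantor_rep_cantor_name: "cantor_rep (cantor_name q) = Some q"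
  unfolding cantor_rep_def cantor_name_def by auto

lemma kleene_app_SomeD:
  assumes "kleene_app a p = Some r"
  shows "\<exists>m. k2_found a p n m"
    and "r n = a (list_encode (n # map p [0..<(LEAST m. k2_found a p n m)])) - 1"
  using assms unfolding kleene_app_def by (auto split: if_splits)

lemma kleene_app_eq_Some:
  assumes "\<And>n. \<exists>m. k2_found a p n m"
  shows "kleene_app a p = Some (\<lambda>n. a (list_encode (n # map p [0..<(LEAST m. k2_found a p n m)])) - 1)"
  using assms unfolding kleene_app_def by auto

lemma cauchy_rep_dist:
  assumes "cauchy_rep s r = Some y"
  shows "dist (s (r i)) y \<le> (1/2) ^ i"
proof -
  have fast: "\<forall>i j. i < j \<longrightarrow> dist (s (r i)) (s (r j)) < (1/2) ^ i"
    and "\<exists>y. (\<lambda>n. s (r n)) \<longlonglongrightarrow> y" and "y = lim (\<lambda>n. s (r n))"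
    using assms unfolding cauchy_rep_def by (auto split: if_splits)
  then have "(\<lambda>n. s (r n)) \<longlonglongrightarrow> y"
    by (auto simp: limI)
  then have "(\<lambda>j. dist (s (r i)) (s (r j))) \<longlonglongrightarrow> dist (s (r i)) y"
    by (intro tendsto_dist tendsto_const)
  moreover have "\<forall>\<^sub>F j in sequentially. dist (s (r i)) (s (r j)) \<le> (1/2) ^ i"
    using fast by (auto intro!: eventually_sequentiallyI[of "Suc i"] less_imp_le)
  ultimately show ?thesis by (rule tendsto_upperbound) simp
qed

lemma cauchy_rep_eq_SomeI:
  assumes close: "\<And>n. dist (s (r n)) y \<le> (1/2) ^ Suc n"
  shows "cauchy_rep s r = Some y"
proof -
  have "dist (s (r i)) (s (r j)) < (1/2) ^ i" if "i < j" for i j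
  proof -
    have "dist (s (r i)) (s (r j)) \<le> (1/2) ^ Suc i + (1/2) ^ Suc j"
      using dist_triangle2[of "s (r i)" "s (r j)" y] close[of i] close[of j] by simp
    also have "(1/2::real) ^ Suc j < (1/2) ^ Suc i"
      using that by (intro power_strict_decreasing) auto
    finally show ?thesis by simp
  qed
  moreover have "(\<lambda>n. s (r n)) \<longlonglongrightarrow> y"
  proof (rule tendsto_dist_iff[THEN iffD2], rule Lim_null_comparison)
    show "\<forall>\<^sub>F n in sequentially. norm (dist (s (r n)) y) \<le> (1/2) ^ Suc n"
      using close by simp
    show "(\<lambda>n. (1/2::real) ^ Suc n) \<longlonglongrightarrow> 0"
      by (rule LIMSEQ_Suc[OF LIMSEQ_power_zero]) simp
  qed
  ultimately show ?thesis unfolding cauchy_rep_def by (auto intro: limI)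
qed

context
  fixes s :: "nat \<Rightarrow> 'b::metric_space" and h :: "nat \<Rightarrow> nat"
  assumes h_approx:
    "\<forall>i j n. \<bar>dist (s i) (s j) - rat_of_code (h (prod_encode (prod_encode (i, j), n)))\<bar> \<le> (1/2) ^ n"
begin

lemma dist_le_if_near:
  assumes "near h n i j"
  shows "dist (s i) (s j) \<le> 10 / 2 ^ (n + 6)"
proof -
  let ?c = "h (prod_encode (prod_encode (i, j), n + 6))"
  have "dist (s i) (s j) \<le> rat_of_code ?c + 1 / 2 ^ (n + 6)"
    using h_approx[rule_format, of i j "n + 6"] unfolding power_one_over abs_le_iff by linarith
  also have "rat_of_code ?c \<le> 9 / 2 ^ (n + 6)"
    using assms unfolding near_def rat_code_le_iff by simp
  finally show ?thesis by (simp add: add_divide_distrib[symmetric])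
qed

lemma near_if_dist_le:
  assumes "dist (s i) (s j) \<le> 8 / 2 ^ (n + 6)"
  shows "near h n i j"
proof -
  let ?c = "h (prod_encode (prod_encode (i, j), n + 6))"
  have "rat_of_code ?c \<le> dist (s i) (s j) + 1 / 2 ^ (n + 6)"
    using h_approx[rule_format, of i j "n + 6"] unfolding power_one_over abs_le_iff by linarith
  also have "\<dots> \<le> 9 / 2 ^ (n + 6)"
    using assms by (simp add: add_divide_distrib[symmetric])
  finally show ?thesis unfolding near_def rat_code_le_iff by simp
qed

end

lemma map_bpair_upt_cong:
  assumes "j \<le> 2 * L" "\<And>i. i < L \<Longrightarrow> r i = r' i"
  shows "map (bpair p r) [0..<j] = map (bpair p r') [0..<j]"
proof (rule map_cong[OF refl])
  fix i assume "i \<in> set [0..<j]"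
  then have "i div 2 < L" using assms(1) by auto
  then show "bpair p r i = bpair p r' i" unfolding bpair_def using assms(2) by simp
qed

lemma query_eq_list_encode:
  assumes "bits L w = map q [0..<L]" "j \<le> known_length m L"
  shows "query n (list_encode (map p [0..<m])) w j
       = list_encode ((n + 4) # map (bpair p (cantor_name q)) [0..<j])"
proof -
  have "pair_entry (list_encode (map p [0..<m])) w i = bpair p (cantor_name q) i" if "i < j" for i
  proof -
    have "i div 2 < m" "i div 2 < L" using that assms(2) unfolding known_length_def by auto
    moreover have "bit w (i div 2) = q (i div 2)"
      using arg_cong[OF assms(1), of "\<lambda>v. v ! (i div 2)"] \<open>i div 2 < L\<close> by (simp add: bits_def)
    ultimately show ?thesis
      unfolding pair_entry_def bpair_def cantor_name_def by (simp add: code_nth_list_encode)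
  qed
  then have "map (pair_entry (list_encode (map p [0..<m])) w) [0..<j]
      = map (bpair p (cantor_name q)) [0..<j]"
    by (intro map_cong) auto
  then show ?thesis unfolding query_def by (rule arg_cong[where f="\<lambda>l. list_encode ((n + 4) # l)"])
qed

lemma digit_eq_kleene_app:
  assumes ka: "kleene_app a (bpair p (cantor_name q)) = Some r"
    and w: "bits L w = map q [0..<L]"
    and halts: "halts_on a n (list_encode (map p [0..<m])) m L w"
  shows "digit a n (list_encode (map p [0..<m])) m L w = r (n + 4)"
proof -
  let ?uc = "list_encode (map p [0..<m])" and ?K = "known_length m L"
  let ?found = "k2_found a (bpair p (cantor_name q)) (n + 4)"
  have found_iff: "0 < a (query n ?uc w j) \<longleftrightarrow> ?found j" if "j \<le> ?K" for j
    unfolding k2_found_def query_eq_list_encode[OF w that] ..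
  obtain j where j: "j \<le> ?K" "?found j"
    using halts found_iff unfolding halts_on_def by (auto simp: less_Suc_eq_le)
  define j0 where "j0 = (LEAST j. ?found j)"
  have j0: "?found j0" "j0 \<le> j"
    unfolding j0_def using j(2) by (auto intro: LeastI Least_le)
  have "(LEAST j. j = ?K \<or> 0 < a (query n ?uc w j)) = j0"
  proof (rule Least_equality)
    show "j0 = ?K \<or> 0 < a (query n ?uc w j0)"
      using found_iff j j0 by auto
    fix y assume y: "y = ?K \<or> 0 < a (query n ?uc w y)"
    show "j0 \<le> y"
    proof (cases "y < ?K")
      case True
      with y have "?found y" using found_iff by simp
      then show ?thesis unfolding j0_def by (rule Least_le)
    next
      case False
      then show ?thesis using j j0 by simp
    qed
  qed
  then show ?thesis
    unfolding digit_def j0_def using kleene_app_SomeD(2)[OF ka, of "n + 4"] found_iff j j0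
    by (simp add: query_eq_list_encode[OF w] j0_def)
qed

lemma sum_bit_eq_card: "(\<Sum>w<N. if bit S w then 1 else 0) = card {w. w < N \<and> bit S w}"
  by (simp add: sum.If_cases Int_def conj_commute)

definition set_code :: "nat \<Rightarrow> nat set \<Rightarrow> nat" where
  "set_code N W = horner_sum of_bool 2 (map (\<lambda>w. w \<in> W) [0..<N])"

lemma bit_set_code: "bit (set_code N W) w \<longleftrightarrow> w < N \<and> w \<in> W"
  unfolding set_code_def by (auto simp: bit_horner_sum_bit_iff)

definition word_name :: "bool list \<Rightarrow> baire" where
  "word_name v i = (if i < length v \<and> v ! i then 1 else 0)"

context
  fixes s :: "nat \<Rightarrow> 'b::metric_space" and h a :: "nat \<Rightarrow> nat" and p :: baire and y :: 'b
    and T :: "bool list set"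
  assumes h_approx:
    "\<forall>i j n. \<bar>dist (s i) (s j) - rat_of_code (h (prod_encode (prod_encode (i, j), n)))\<bar> \<le> (1/2) ^ n"
    and measure_paths: "measure cantor_measure (paths T) > 1/2"
    and names_on_paths:
      "\<forall>q\<in>paths T. \<exists>r. kleene_app a (bpair p (cantor_name q)) = Some r \<and> cauchy_rep s r = Some y"
begin

lemma uniform_halting:
  "\<exists>L. \<forall>q\<in>paths T. \<exists>j\<le>2 * L. 0 < a (list_encode ((n + 4) # map (bpair p (cantor_name q)) [0..<j]))"
proof -
  define D where
    "D v \<longleftrightarrow> (\<exists>j\<le>2 * length v. 0 < a (list_encode ((n + 4) # map (bpair p (word_name v)) [0..<j])))" for v
  have D_prefix: "D (map q [0..<L]) \<longleftrightarrow>
      (\<exists>j\<le>2 * L. 0 < a (list_encode ((n + 4) # map (bpair p (cantor_name q)) [0..<j])))" for q L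
  proof -
    have "map (bpair p (word_name (map q [0..<L]))) [0..<j] = map (bpair p (cantor_name q)) [0..<j]"
      if "j \<le> 2 * L" for j
      using that by (rule map_bpair_upt_cong) (simp add: word_name_def cantor_name_def)
    then show ?thesis unfolding D_def length_map length_upt diff_zero by (metis (no_types, lifting))
  qed
  have "D (v @ u)" if "D v" for v u
  proof -
    obtain j where j: "j \<le> 2 * length v"
      "0 < a (list_encode ((n + 4) # map (bpair p (word_name v)) [0..<j]))"
      using \<open>D v\<close> unfolding D_def by blast
    have "map (bpair p (word_name (v @ u))) [0..<j] = map (bpair p (word_name v)) [0..<j]"
      using j(1) by (rule map_bpair_upt_cong) (simp add: word_name_def nth_append)
    with j(2) have "0 < a (list_encode ((n + 4) # map (bpair p (word_name (v @ u))) [0..<j]))"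
      by (simp only:)
    moreover have "j \<le> 2 * length (v @ u)" using j(1) by simp
    ultimately show ?thesis unfolding D_def by blast
  qed
  moreover have "\<exists>L. D (map q [0..<L])" if q: "q \<in> paths T" for q
  proof -
    obtain r where "kleene_app a (bpair p (cantor_name q)) = Some r"
      using names_on_paths q by blast
    then obtain m where "k2_found a (bpair p (cantor_name q)) (n + 4) m"
      using kleene_app_SomeD(1) by blast
    then have "D (map q [0..<m])"
      unfolding D_prefix k2_found_def by (intro exI[of _ m]) simp
    then show ?thesis ..
  qed
  ultimately show ?thesis
    using paths_uniform_bound[of D T] unfolding D_prefix by blast
qed

lemma prefix_digit_close:
  assumes L: "\<forall>q\<in>paths T. \<exists>j\<le>2 * L. 0 < a (list_encode ((n + 4) # map (bpair p (cantor_name q)) [0..<j]))"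
    and "L \<le> m" and q: "q \<in> paths T" and w: "bits L w = map q [0..<L]"
  shows "halts_on a n (list_encode (map p [0..<m])) m L w \<and>
    dist (s (digit a n (list_encode (map p [0..<m])) m L w)) y \<le> (1/2) ^ (n + 4)"
proof -
  let ?uc = "list_encode (map p [0..<m])"
  have K: "known_length m L = 2 * L" unfolding known_length_def using \<open>L \<le> m\<close> by simp
  obtain r where r: "kleene_app a (bpair p (cantor_name q)) = Some r" "cauchy_rep s r = Some y"
    using names_on_paths q by blast
  obtain j where "j \<le> 2 * L" "0 < a (list_encode ((n + 4) # map (bpair p (cantor_name q)) [0..<j]))"
    using L q by blast
  then have halts: "halts_on a n ?uc m L w"
    unfolding halts_on_def K using query_eq_list_encode[OF w, of j m n p] K
    by (intro exI[of _ j]) auto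
  then have "digit a n ?uc m L w = r (n + 4)" by (rule digit_eq_kleene_app[OF r(1) w])
  with halts cauchy_rep_dist[OF r(2)] show ?thesis by simp
qed

text \<open>The voters are the length-L prefixes of paths of T, for an L beyond which the
computation of the digit halts on every path.\<close>

lemma valid_vote_exists:
  "\<exists>m. \<exists>t<m.
     valid_vote a h n (list_encode (map p [0..<m])) m (fst (prod_decode t)) (snd (prod_decode t))"
proof -
  obtain L where L:
    "\<forall>q\<in>paths T. \<exists>j\<le>2 * L. 0 < a (list_encode ((n + 4) # map (bpair p (cantor_name q)) [0..<j]))"
    using uniform_halting by blast
  define W where "W = {w. w < 2 ^ L \<and> (\<exists>q\<in>paths T. bits L w = map q [0..<L])}"
  define S where "S = set_code (2 ^ L) W"
  define t where "t = prod_encode (L, S)"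
  define m where "m = Suc t + L"
  let ?uc = "list_encode (map p [0..<m])"
  have S: "bit S w \<longleftrightarrow> w \<in> W" for w unfolding S_def bit_set_code W_def by auto
  have voter: "halts_on a n ?uc m L w \<and> dist (s (digit a n ?uc m L w)) y \<le> (1/2) ^ (n + 4)"
    if "w \<in> W" for w
  proof -
    have "L \<le> m" unfolding m_def by simp
    then show ?thesis using that prefix_digit_close[OF L] unfolding W_def by blast
  qed
  have "valid_vote a h n ?uc m L S"
    unfolding valid_vote_def
  proof (intro conjI allI impI)
    have "{w. w < 2 ^ L \<and> bit S w} = W" using S unfolding W_def by auto
    then show "(2::nat) ^ L < 2 * (\<Sum>w<2 ^ L. if bit S w then 1 else 0)"
      unfolding sum_bit_eq_card W_def using majority_of_path_prefixes[OF measure_paths] by simp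
    show "halts_on a n ?uc m L w" if "bit S w" for w
      using voter S that by blast
    fix w w' assume "w < 2 ^ L" "w' < 2 ^ L" "bit S w \<and> bit S w'"
    then have "dist (s (digit a n ?uc m L w)) y \<le> (1/2) ^ (n + 4)"
      "dist (s (digit a n ?uc m L w')) y \<le> (1/2) ^ (n + 4)"
      using voter S by auto
    then have "dist (s (digit a n ?uc m L w)) (s (digit a n ?uc m L w')) \<le> 8 / 2 ^ (n + 6)"
      using dist_triangle2[of "s (digit a n ?uc m L w)" "s (digit a n ?uc m L w')" y]
      by (simp add: power_add power_one_over)
    then show "near h n (digit a n ?uc m L w) (digit a n ?uc m L w')"
      by (rule near_if_dist_le[OF h_approx])
  qed
  moreover have "t < m" "fst (prod_decode t) = L" "snd (prod_decode t) = S"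
    unfolding m_def t_def by simp_all
  ultimately show ?thesis by metis
qed

text \<open>Since the voters form a majority they include a prefix of a path of T, whose digit is
within 2^-(n+4) of y, and the voters' digits are pairwise close.\<close>

lemma dist_vote_value:
  assumes "valid_vote a h n (list_encode (map p [0..<m])) m L S"
  shows "dist (s (vote_value a n (list_encode (map p [0..<m])) m L S)) y \<le> 14 / 2 ^ (n + 6)"
proof -
  let ?uc = "list_encode (map p [0..<m])" and ?W = "{w. w < 2 ^ L \<and> bit S w}"
  have majority: "2 ^ L < 2 * card ?W" and halts: "\<And>w. w \<in> ?W \<Longrightarrow> halts_on a n ?uc m L w"
    and near: "\<And>w w'. w \<in> ?W \<Longrightarrow> w' \<in> ?W \<Longrightarrow> near h n (digit a n ?uc m L w) (digit a n ?uc m L w')"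
    using assms unfolding valid_vote_def sum_bit_eq_card by auto
  obtain q w where q: "q \<in> paths T" and w: "w \<in> ?W" "bits L w = map q [0..<L]"
    using majority_meets_paths[OF measure_paths _ majority] by blast
  obtain r where r: "kleene_app a (bpair p (cantor_name q)) = Some r" "cauchy_rep s r = Some y"
    using names_on_paths q by blast
  have digit_w: "digit a n ?uc m L w = r (n + 4)"
    by (rule digit_eq_kleene_app[OF r(1) w(2) halts[OF w(1)]])
  define w0 where "w0 = (LEAST w'. w' = 2 ^ L \<or> bit S w')"
  have "w0 \<le> w" unfolding w0_def by (rule Least_le) (use w(1) in simp)
  moreover have "w0 = 2 ^ L \<or> bit S w0" unfolding w0_def by (rule LeastI[of _ w]) (use w(1) in simp)
  ultimately have "w0 \<in> ?W" using w(1) by auto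
  have "dist (s (vote_value a n ?uc m L S)) (s (digit a n ?uc m L w)) \<le> 10 / 2 ^ (n + 6)"
    unfolding vote_value_def w0_def[symmetric]
    using dist_le_if_near[OF h_approx near[OF \<open>w0 \<in> ?W\<close> w(1)]] .
  moreover have "dist (s (r (n + 4))) y \<le> 4 / 2 ^ (n + 6)"
    using cauchy_rep_dist[OF r(2), of "n + 4"] by (simp add: power_add power_one_over)
  ultimately show ?thesis
    using dist_triangle[of "s (vote_value a n ?uc m L S)" y "s (digit a n ?uc m L w)"] digit_w
    by (simp add: add_divide_distrib[symmetric])
qed

lemma kleene_app_majority_vote:
  "\<exists>r. kleene_app (majority_vote a h) p = Some r \<and> cauchy_rep s r = Some y"
proof -
  let ?b = "majority_vote a h"
  have vote: "0 < ?b (list_encode (n # map p [0..<m])) \<longleftrightarrow>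
      first_vote a h n (list_encode (map p [0..<m])) m < m" for n m
    unfolding majority_vote_list_encode Let_def by simp
  have found: "\<exists>m. k2_found ?b p n m" for n
  proof -
    obtain m t where "t < m"
      "valid_vote a h n (list_encode (map p [0..<m])) m (fst (prod_decode t)) (snd (prod_decode t))"
      using valid_vote_exists by blast
    then have "first_vote a h n (list_encode (map p [0..<m])) m \<le> t"
      unfolding first_vote_def by (intro Least_le) simp
    with \<open>t < m\<close> have "first_vote a h n (list_encode (map p [0..<m])) m < m"
      by simp
    then show ?thesis unfolding k2_found_def vote by blast
  qed
  define r where "r n = ?b (list_encode (n # map p [0..<(LEAST m. k2_found ?b p n m)])) - 1" for n
  have "dist (s (r n)) y \<le> (1/2) ^ Suc n" for n
  proof -
    define m where "m = (LEAST m. k2_found ?b p n m)"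
    let ?uc = "list_encode (map p [0..<m])"
    define t where "t = first_vote a h n ?uc m"
    have "k2_found ?b p n m" unfolding m_def using found by (rule LeastI_ex)
    then have "t < m" unfolding k2_found_def vote t_def .
    moreover have "t = m \<or> valid_vote a h n ?uc m (fst (prod_decode t)) (snd (prod_decode t))"
      unfolding t_def first_vote_def by (rule LeastI[of _ m]) simp
    ultimately have "dist (s (r n)) y \<le> 14 / 2 ^ (n + 6)"
      using dist_vote_value unfolding r_def m_def[symmetric] majority_vote_list_encode Let_def t_def
      by simp
    also have "\<dots> \<le> (1/2) ^ Suc n" by (simp add: power_add field_simps)
    finally show ?thesis .
  qed
  then have "cauchy_rep s r = Some y" by (rule cauchy_rep_eq_SomeI)
  moreover have "kleene_app ?b p = Some r" unfolding r_def by (rule kleene_app_eq_Some[OF found])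
  ultimately show ?thesis by blast
qed

end

section \<open>From the reduction to the majority vote\<close>

lemma realizer_exists: "\<exists>G. realizer dZ cantor_rep F G"
proof
  show "realizer dZ cantor_rep F (\<lambda>k. Some (cantor_name (SOME y. y \<in> F (the (dZ k)))))"
    unfolding realizer_def mv_dom_def
    by (auto simp: cantor_rep_cantor_name some_in_eq)
qed

lemma realizer_restrict:
  assumes "realizer dZ dW F G"
  shows "realizer dZ dW F (\<lambda>k. if \<exists>z. dZ k = Some z \<and> z \<in> mv_dom F then G k else None)"
  using assms unfolding realizer_def by auto

lemma realizer_update:
  assumes "realizer dZ cantor_rep F G" "dZ k = Some z" "q \<in> F z"
  shows "realizer dZ cantor_rep F (G(k := Some (cantor_name q)))"
  using assms unfolding realizer_def by (auto simp: cantor_rep_cantor_name)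

text \<open>A realizer of 1/2-WWKL may be modified at a single name to return any path of the
tree, so the outer reduction map must turn every path into a name of f x.\<close>

lemma weihrauch_reduction_to_half_wwkl:
  fixes dX :: "baire \<Rightarrow> 'a option" and dY :: "baire \<Rightarrow> 'b option" and f :: "'a \<Rightarrow> 'b"
    and dZ :: "baire \<Rightarrow> 'c option" and g :: "'c \<Rightarrow> bool list set set"
  assumes reduction: "\<forall>G. realizer dZ cantor_rep (mv_comp half_wwkl g) G \<longrightarrow>
      realizer dX dY (\<lambda>x. {f x}) (\<lambda>p. Option.bind (K p) (\<lambda>k. Option.bind (G k) (\<lambda>q. H (bpair p q))))"
    and p: "dX p = Some x"
  shows "\<exists>T. measure cantor_measure (paths T) > 1/2 \<and>
    (\<forall>q\<in>paths T. \<exists>r. H (bpair p (cantor_name q)) = Some r \<and> dY r = Some (f x))"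
proof -
  let ?F = "mv_comp half_wwkl g"
  have reduces:
    "\<exists>r. Option.bind (K p) (\<lambda>k. Option.bind (G k) (\<lambda>q. H (bpair p q))) = Some r \<and> dY r = Some (f x)"
    if "realizer dZ cantor_rep ?F G" for G
    using reduction that p unfolding realizer_def mv_dom_def by fastforce
  obtain G0 where "realizer dZ cantor_rep ?F G0" using realizer_exists by blast
  then have G0:
    "realizer dZ cantor_rep ?F (\<lambda>k. if \<exists>z. dZ k = Some z \<and> z \<in> mv_dom ?F then G0 k else None)"
    (is "realizer _ _ _ ?G0") by (rule realizer_restrict)
  obtain k where k: "K p = Some k" and "?G0 k \<noteq> None"
    using reduces[OF G0] by (cases "K p") (auto split: Option.bind_splits)
  then obtain z where z: "dZ k = Some z" "?F z \<noteq> {}"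
    unfolding mv_dom_def by (auto split: if_splits)
  then obtain T where T: "T \<in> g z" "half_wwkl T \<noteq> {}"
    and F_z: "?F z = {q. \<exists>T\<in>g z. q \<in> half_wwkl T}"
    unfolding mv_comp_def by (auto split: if_splits)
  have "measure cantor_measure (paths T) > 1/2" "half_wwkl T = paths T"
    using T(2) unfolding half_wwkl_def by (auto split: if_splits)
  moreover have "\<exists>r. H (bpair p (cantor_name q)) = Some r \<and> dY r = Some (f x)" if "q \<in> paths T" for q
  proof -
    have "q \<in> ?F z" using F_z T(1) \<open>half_wwkl T = paths T\<close> that by auto
    then show ?thesis using reduces[OF realizer_update[OF G0 z(1)]] k by auto
  qed
  ultimately show ?thesis by blast
qed

lemma realizer_majority_vote:
  fixes dX :: "baire \<Rightarrow> 'a option" and s :: "nat \<Rightarrow> 'b::metric_space" and f :: "'a \<Rightarrow> 'b"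
    and dZ :: "baire \<Rightarrow> 'c option" and g :: "'c \<Rightarrow> bool list set set"
  assumes reduction: "\<forall>G. realizer dZ cantor_rep (mv_comp half_wwkl g) G \<longrightarrow>
      realizer dX (cauchy_rep s) (\<lambda>x. {f x})
        (\<lambda>p. Option.bind (K p) (\<lambda>k. Option.bind (G k) (\<lambda>q. H (bpair p q))))"
    and associate: "\<And>P. H P \<noteq> None \<Longrightarrow> kleene_app a P = H P"
    and h_approx:
      "\<forall>i j n. \<bar>dist (s i) (s j) - rat_of_code (h (prod_encode (prod_encode (i, j), n)))\<bar> \<le> (1/2) ^ n"
  shows "realizer dX (cauchy_rep s) (\<lambda>x. {f x}) (kleene_app (majority_vote a h))"
  unfolding realizer_def
proof (intro allI impI)
  fix p x assume "dX p = Some x \<and> x \<in> mv_dom (\<lambda>x. {f x})"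
  then obtain T where T: "measure cantor_measure (paths T) > 1/2"
    "\<forall>q\<in>paths T. \<exists>r. H (bpair p (cantor_name q)) = Some r \<and> cauchy_rep s r = Some (f x)"
    using weihrauch_reduction_to_half_wwkl[OF reduction] by blast
  have "\<forall>q\<in>paths T. \<exists>r. kleene_app a (bpair p (cantor_name q)) = Some r \<and> cauchy_rep s r = Some (f x)"
    using T(2) associate by fastforce
  then have "\<exists>r. kleene_app (majority_vote a h) p = Some r \<and> cauchy_rep s r = Some (f x)"
    by (rule kleene_app_majority_vote[OF h_approx T(1)])
  then show "\<exists>q y. kleene_app (majority_vote a h) p = Some q \<and> cauchy_rep s q = Some y \<and> y \<in> {f x}"
    by blast
qed

theorem theorem13p2:
  fixes dX :: "baire \<Rightarrow> 'a option"
    and s :: "nat \<Rightarrow> 'b::metric_space"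
    and f :: "'a \<Rightarrow> 'b"
    and dZ :: "baire \<Rightarrow> 'c option"
    and g :: "'c \<Rightarrow> bool list set set"
  assumes "representation dX"
    and "computable_metric_space s"
    and "representation dZ"
    and "\<forall>z. g z \<subseteq> Tr"
    and "weihrauch_le dX (cauchy_rep s) (\<lambda>x. {f x}) dZ cantor_rep (mv_comp half_wwkl g)"
  shows "computable_mv dX (cauchy_rep s) (\<lambda>x. {f x})"
proof -
  obtain H K where "computable_pf H" and reduction:
    "\<forall>G. realizer dZ cantor_rep (mv_comp half_wwkl g) G \<longrightarrow> realizer dX (cauchy_rep s) (\<lambda>x. {f x})
       (\<lambda>p. Option.bind (K p) (\<lambda>k. Option.bind (G k) (\<lambda>q. H (bpair p q))))"
    using assms(5) unfolding weihrauch_le_def by blast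
  then obtain a where a: "total_computable a" "\<And>P. H P \<noteq> None \<Longrightarrow> kleene_app a P = H P"
    unfolding computable_pf_def by blast
  obtain h where h: "total_computable h"
    "\<forall>i j n. \<bar>dist (s i) (s j) - rat_of_code (h (prod_encode (prod_encode (i, j), n)))\<bar> \<le> (1/2) ^ n"
    using assms(2) unfolding computable_metric_space_def by blast
  have "computable_pf (kleene_app (majority_vote a h))"
    unfolding computable_pf_def using total_computable_majority_vote[OF a(1) h(1)] by blast
  moreover have "realizer dX (cauchy_rep s) (\<lambda>x. {f x}) (kleene_app (majority_vote a h))"
    by (rule realizer_majority_vote[OF reduction a(2) h(2)])
  ultimately show ?thesis unfolding computable_mv_def by blast
qed

end
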